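(* Let $B$ be a Horn program, $E^+,E^-$ finite sets of ground atoms, and $H\in\mathcal{H}_{D,C}$ a hypothesis with $tn(H,B,E^-)=|E^-|$. If $H'\in\mathcal{H}_{D,C}$ is a specialization of $H$, then $S_{ACC}(H,B,E^+,E^-)\geq S_{ACC}(H',B,E^+,E^-)$.
   Context: A definite clause is a clause with exactly one positive literal. A hypothesis is a finite set of definite clauses; $\mathcal{H}_{D,C}$ denotes the hypothesis space of hypotheses consistent with a declaration bias $D$ and hypothesis constraints $C$ (only membership matters). $B$ is background knowledge, $E^+$ positive and $E^-$ negative examples. For a hypothesis $H$: $tp(H,B,E^+)=|\{e\in E^+ : H\cup B\models e\}|$, $tn(H,B,E^-)=|\{e\in E^- : H\cup B\not\models e\}|$, and $S_{ACC}(H,B,E^+,E^-)=tp(H,B,E^+)+tn(H,B,E^-)$. A clause $C_1$ subsumes a clause $C_2$ iff there is a substitution $\theta$ with $C_1\theta\subseteq C_2$. A clausal theory $T_1$ subsumes $T_2$ ($T_1\preceq T_2$) iff every clause of $T_2$ is subsumed by some clause of $T_1$. $T_1$ is a generalization of $T_2$ iff $T_1\preceq T_2$, and a specialization of $T_2$ iff $T_2\preceq T_1$. *)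

theory Defs
  imports Main
begin

datatype ('f, 'v) trm = Var 'v | Fn 'f "('f, 'v) trm list"

type_synonym ('p, 'f, 'v) atom = "'p \<times> ('f, 'v) trm list"

datatype ('p, 'f, 'v) lit = Pos "('p, 'f, 'v) atom" | Neg "('p, 'f, 'v) atom"

type_synonym ('p, 'f, 'v) clause = "('p, 'f, 'v) lit set"

type_synonym ('f, 'v) subst = "'v \<Rightarrow> ('f, 'v) trm"

fun subst_trm :: "('f, 'v) trm \<Rightarrow> ('f, 'v) subst \<Rightarrow> ('f, 'v) trm" where
  "subst_trm (Var x) \<sigma> = \<sigma> x"
| "subst_trm (Fn f ts) \<sigma> = Fn f (map (\<lambda>t. subst_trm t \<sigma>) ts)"

definition subst_atom :: "('p, 'f, 'v) atom \<Rightarrow> ('f, 'v) subst \<Rightarrow> ('p, 'f, 'v) atom" where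
  "subst_atom a \<sigma> = (fst a, map (\<lambda>t. subst_trm t \<sigma>) (snd a))"

fun subst_lit :: "('p, 'f, 'v) lit \<Rightarrow> ('f, 'v) subst \<Rightarrow> ('p, 'f, 'v) lit" where
  "subst_lit (Pos a) \<sigma> = Pos (subst_atom a \<sigma>)"
| "subst_lit (Neg a) \<sigma> = Neg (subst_atom a \<sigma>)"

definition subst_clause :: "('p, 'f, 'v) clause \<Rightarrow> ('f, 'v) subst \<Rightarrow> ('p, 'f, 'v) clause" where
  "subst_clause C \<sigma> = (\<lambda>l. subst_lit l \<sigma>) ` C"

fun ground_trm :: "('f, 'v) trm \<Rightarrow> bool" where
  "ground_trm (Var x) = False"
| "ground_trm (Fn f ts) = (\<forall>t \<in> set ts. ground_trm t)"

definition ground_atom :: "('p, 'f, 'v) atom \<Rightarrow> bool" where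
  "ground_atom a = (\<forall>t \<in> set (snd a). ground_trm t)"

definition ground_subst :: "('f, 'v) subst \<Rightarrow> bool" where
  "ground_subst \<sigma> = (\<forall>x. ground_trm (\<sigma> x))"

definition pos_lits :: "('p, 'f, 'v) clause \<Rightarrow> ('p, 'f, 'v) atom set" where
  "pos_lits C = {a. Pos a \<in> C}"

definition definite_clause :: "('p, 'f, 'v) clause \<Rightarrow> bool" where
  "definite_clause C = (finite C \<and> card (pos_lits C) = 1)"

definition horn_clause :: "('p, 'f, 'v) clause \<Rightarrow> bool" where
  "horn_clause C = (finite C \<and> card (pos_lits C) \<le> 1)"

definition horn_program :: "('p, 'f, 'v) clause set \<Rightarrow> bool" where
  "horn_program B = (finite B \<and> (\<forall>C \<in> B. horn_clause C))"

definition hypothesis :: "('p, 'f, 'v) clause set \<Rightarrow> bool" where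
  "hypothesis H = (finite H \<and> (\<forall>C \<in> H. definite_clause C))"

type_synonym ('p, 'f, 'v) interp = "('p, 'f, 'v) atom set"

fun lit_true :: "('p, 'f, 'v) interp \<Rightarrow> ('p, 'f, 'v) lit \<Rightarrow> bool" where
  "lit_true I (Pos a) = (a \<in> I)"
| "lit_true I (Neg a) = (a \<notin> I)"

text \<open>A clause is true in I iff every ground instance has a true literal
  (clauses are implicitly universally quantified).\<close>
definition clause_true :: "('p, 'f, 'v) interp \<Rightarrow> ('p, 'f, 'v) clause \<Rightarrow> bool" where
  "clause_true I C = (\<forall>\<sigma>. ground_subst \<sigma> \<longrightarrow> (\<exists>l \<in> C. lit_true I (subst_lit l \<sigma>)))"

definition is_model :: "('p, 'f, 'v) interp \<Rightarrow> ('p, 'f, 'v) clause set \<Rightarrow> bool" where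
  "is_model I S = (\<forall>C \<in> S. clause_true I C)"

definition entails :: "('p, 'f, 'v) clause set \<Rightarrow> ('p, 'f, 'v) atom \<Rightarrow> bool" where
  "entails S e = (\<forall>I. is_model I S \<longrightarrow> e \<in> I)"

definition tp :: "('p, 'f, 'v) clause set \<Rightarrow> ('p, 'f, 'v) clause set \<Rightarrow> ('p, 'f, 'v) atom set \<Rightarrow> nat" where
  "tp H B Ep = card {e \<in> Ep. entails (H \<union> B) e}"

definition tn :: "('p, 'f, 'v) clause set \<Rightarrow> ('p, 'f, 'v) clause set \<Rightarrow> ('p, 'f, 'v) atom set \<Rightarrow> nat" where
  "tn H B En = card {e \<in> En. \<not> entails (H \<union> B) e}"

definition S_ACC :: "('p, 'f, 'v) clause set \<Rightarrow> ('p, 'f, 'v) clause set \<Rightarrow> ('p, 'f, 'v) atom set \<Rightarrow> ('p, 'f, 'v) atom set \<Rightarrow> nat" where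
  "S_ACC H B Ep En = tp H B Ep + tn H B En"

definition clause_subsumes :: "('p, 'f, 'v) clause \<Rightarrow> ('p, 'f, 'v) clause \<Rightarrow> bool" where
  "clause_subsumes C1 C2 = (\<exists>\<theta>. subst_clause C1 \<theta> \<subseteq> C2)"

definition theory_subsumes :: "('p, 'f, 'v) clause set \<Rightarrow> ('p, 'f, 'v) clause set \<Rightarrow> bool" where
  "theory_subsumes T1 T2 = (\<forall>C2 \<in> T2. \<exists>C1 \<in> T1. clause_subsumes C1 C2)"

definition specialization :: "('p, 'f, 'v) clause set \<Rightarrow> ('p, 'f, 'v) clause set \<Rightarrow> bool" where
  "specialization T1 T2 = theory_subsumes T2 T1"

end

theory Submission
  imports Defs
begin

text \<open>If \<open>H\<close> subsumes \<open>H'\<close>, every ground instance of a clause of \<open>H'\<close> contains a ground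
  instance of a clause of \<open>H\<close>, so every model of \<open>H \<union> B\<close> is a model of \<open>H' \<union> B\<close> and
  \<open>H \<union> B\<close> entails every atom that \<open>H' \<union> B\<close> entails. Hence specializing cannot raise the
  number of true positives, while the number of true negatives of \<open>H\<close> is already maximal.\<close>

lemma subst_trm_subst_trm:
  "subst_trm (subst_trm t \<theta>) \<sigma> = subst_trm t (\<lambda>x. subst_trm (\<theta> x) \<sigma>)"
  by (induction t) auto

lemma subst_lit_subst_lit:
  "subst_lit (subst_lit l \<theta>) \<sigma> = subst_lit l (\<lambda>x. subst_trm (\<theta> x) \<sigma>)"
  by (cases l) (auto simp: subst_atom_def subst_trm_subst_trm comp_def)

lemma ground_trm_subst_trm:
  "ground_subst \<sigma> \<Longrightarrow> ground_trm (subst_trm t \<sigma>)"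
  by (induction t) (auto simp: ground_subst_def)

lemma ground_subst_comp:
  "ground_subst \<sigma> \<Longrightarrow> ground_subst (\<lambda>x. subst_trm (\<theta> x) \<sigma>)"
  by (simp add: ground_subst_def ground_trm_subst_trm)

lemma clause_true_if_subsumes:
  fixes C1 C2 :: "('p, 'f, 'v) clause"
  assumes "clause_subsumes C1 C2" and "clause_true I C1"
  shows "clause_true I C2"
  unfolding clause_true_def
proof (intro allI impI)
  fix \<sigma> :: "('f, 'v) subst"
  assume "ground_subst \<sigma>"
  obtain \<theta> where \<theta>: "subst_clause C1 \<theta> \<subseteq> C2"
    using assms(1) clause_subsumes_def by blast
  obtain l where "l \<in> C1" and "lit_true I (subst_lit l (\<lambda>x. subst_trm (\<theta> x) \<sigma>))"
    using assms(2) ground_subst_comp[OF \<open>ground_subst \<sigma>\<close>] clause_true_def by blast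
  moreover have "subst_lit l \<theta> \<in> C2"
    using \<theta> \<open>l \<in> C1\<close> by (auto simp: subst_clause_def)
  ultimately show "\<exists>l\<in>C2. lit_true I (subst_lit l \<sigma>)"
    by (metis subst_lit_subst_lit)
qed

lemma is_model_if_theory_subsumes:
  assumes "theory_subsumes T1 T2" and "is_model I T1"
  shows "is_model I T2"
  using assms clause_true_if_subsumes
  unfolding theory_subsumes_def is_model_def by blast

lemma entails_if_theory_subsumes:
  assumes "theory_subsumes H H'" and "entails (H' \<union> B) e"
  shows "entails (H \<union> B) e"
  using assms is_model_if_theory_subsumes[OF assms(1)]
  unfolding entails_def is_model_def by blast

lemma tp_le_if_theory_subsumes:
  assumes "theory_subsumes H H'" and "finite Ep"
  shows "tp H' B Ep \<le> tp H B Ep"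
  unfolding tp_def
  using assms(2) entails_if_theory_subsumes[OF assms(1)] by (intro card_mono) auto

lemma tn_le_card:
  "finite En \<Longrightarrow> tn H B En \<le> card En"
  unfolding tn_def by (intro card_mono) auto

theorem proposition4p9:
  fixes B :: "('p, 'f, 'v) clause set"
    and Ep En :: "('p, 'f, 'v) atom set"
    and HDC :: "('p, 'f, 'v) clause set set"
    and H H' :: "('p, 'f, 'v) clause set"
  assumes "\<forall>X \<in> HDC. hypothesis X"
    and "horn_program B"
    and "finite Ep" and "\<forall>e \<in> Ep. ground_atom e"
    and "finite En" and "\<forall>e \<in> En. ground_atom e"
    and "H \<in> HDC"
    and "tn H B En = card En"
    and "H' \<in> HDC"
    and "specialization H' H"
  shows "S_ACC H B Ep En \<ge> S_ACC H' B Ep En"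
proof -
  have "theory_subsumes H H'"
    using assms(10) specialization_def by blast
  then have "tp H' B Ep \<le> tp H B Ep"
    using assms(3) by (rule tp_le_if_theory_subsumes)
  moreover have "tn H' B En \<le> tn H B En"
    using assms(5,8) tn_le_card by metis
  ultimately show ?thesis
    unfolding S_ACC_def by linarith
qed

end
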